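(* Let $\kappa$ be an infinite cardinal and assume $\clubsuit^{\Diamond}_{\kappa^+}$. Then there exists a sequence $(B_\delta\mid\delta\in\lim(\kappa^+))$ such that for every limit ordinal $\delta<\kappa^+$, $B_\delta\subseteq\delta$ is a club (closed unbounded) subset of $\delta$, and for every club $C\subseteq\kappa^+$ there is a club $D\subseteq C$ of $\kappa^+$ such that the set $\{\delta\in\lim(\kappa^+)\mid D\cap\delta=B_\delta\}$ is stationary in $\kappa^+$.
   Context: $\lim(\kappa^+)$ denotes the set of limit ordinals below $\kappa^+$. For a regular uncountable cardinal $\lambda$, a superclub sequence for $\lambda$ is a sequence $(S_\alpha\mid\alpha<\lambda)$ with $S_\alpha\subseteq\alpha$ for each $\alpha$, such that for every $A\in[\lambda]^\lambda$ there is $B\in[A]^\lambda$ for which $\{\alpha<\lambda\mid B\cap\alpha=S_\alpha\}$ is stationary in $\lambda$. $\clubsuit^{\Diamond}_\lambda$ (superclub at $\lambda$) is the statement that a superclub sequence for $\lambda$ exists. (Since prediction happens on a stationary set, one may index a superclub sequence by limit ordinals only.) *)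

theory Defs
  imports Main
begin

text \<open>Ordinals below a cardinal are modelled as the field of a well-order W
(for us W = cardSuc r, i.e. kappa^+ with kappa = r).\<close>

definition wo_limit :: "'a rel \<Rightarrow> 'a \<Rightarrow> bool" where
  "wo_limit W d \<longleftrightarrow> d \<in> Field W \<and> Order_Relation.underS W d \<noteq> {} \<and>
     (\<forall>b \<in> Order_Relation.underS W d. \<exists>c \<in> Order_Relation.underS W d. (b, c) \<in> W \<and> b \<noteq> c)"

definition wo_limits :: "'a rel \<Rightarrow> 'a set" where
  "wo_limits W = {d. wo_limit W d}"

definition wo_unbounded_in :: "'a rel \<Rightarrow> 'a set \<Rightarrow> 'a set \<Rightarrow> bool" where
  "wo_unbounded_in W A X \<longleftrightarrow> (\<forall>b \<in> A. \<exists>c \<in> X \<inter> A. (b, c) \<in> W \<and> b \<noteq> c)"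

definition wo_closed_in :: "'a rel \<Rightarrow> 'a set \<Rightarrow> 'a set \<Rightarrow> bool" where
  "wo_closed_in W A X \<longleftrightarrow>
     (\<forall>g \<in> A. wo_limit W g \<and> wo_unbounded_in W (Order_Relation.underS W g) X \<longrightarrow> g \<in> X)"

definition wo_club_in :: "'a rel \<Rightarrow> 'a set \<Rightarrow> 'a set \<Rightarrow> bool" where
  "wo_club_in W A X \<longleftrightarrow> X \<subseteq> A \<and> wo_unbounded_in W A X \<and> wo_closed_in W A X"

definition wo_club :: "'a rel \<Rightarrow> 'a set \<Rightarrow> bool" where
  "wo_club W X \<longleftrightarrow> wo_club_in W (Field W) X"

definition wo_stationary :: "'a rel \<Rightarrow> 'a set \<Rightarrow> bool" where
  "wo_stationary W T \<longleftrightarrow> T \<subseteq> Field W \<and> (\<forall>C. wo_club W C \<longrightarrow> T \<inter> C \<noteq> {})"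

definition superclub_seq :: "'a rel \<Rightarrow> ('a \<Rightarrow> 'a set) \<Rightarrow> bool" where
  "superclub_seq W S \<longleftrightarrow>
     (\<forall>a \<in> Field W. S a \<subseteq> Order_Relation.underS W a) \<and>
     (\<forall>A. A \<subseteq> Field W \<and> (card_of A, card_of (Field W)) \<in> ordIso \<longrightarrow>
        (\<exists>B. B \<subseteq> A \<and> (card_of B, card_of (Field W)) \<in> ordIso \<and>
             wo_stationary W {a \<in> Field W. B \<inter> Order_Relation.underS W a = S a}))"

definition superclub :: "'a rel \<Rightarrow> bool" where
  "superclub W \<longleftrightarrow> (\<exists>S. superclub_seq W S)"

end

(*
  Given a club C of \<kappa>\<^sup>+, regularity gives |C| = \<kappa>\<^sup>+, so the superclub sequence S
  guesses some B \<subseteq> C of size \<kappa>\<^sup>+ on a stationary set T. The closure D of B is a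
  club inside C, and at every d \<in> T that is a limit point of B (a club of such d) the
  guess S d = B \<inter> d is cofinal in d and its closure inside d is D \<inter> d. So the closures
  of the guesses form the required sequence. That clubs are closed under intersection
  and that limit points of an unbounded set form a club uses that \<kappa>\<^sup>+ is regular and
  uncountable: the orbit of a point under an inflationary map is countable, hence
  bounded, and its supremum is a limit point of everything it interleaves.
*)

theory Submission
  imports Defs
begin

unbundle cardinal_syntax

definition wo_closure :: "'a rel \<Rightarrow> 'a set \<Rightarrow> 'a set" where
  "wo_closure r X =
     {g \<in> Field r. g \<in> X \<or> (wo_limit r g \<and> wo_unbounded_in r (underS r g) X)}"

lemma wo_unbounded_in_mono:
  "X \<subseteq> Y \<Longrightarrow> wo_unbounded_in r A X \<Longrightarrow> wo_unbounded_in r A Y"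
  unfolding wo_unbounded_in_def by blast

lemma wo_unbounded_in_Int_iff:
  "wo_unbounded_in r A (X \<inter> A) \<longleftrightarrow> wo_unbounded_in r A X"
  unfolding wo_unbounded_in_def by blast

lemma wo_unbounded_in_underS_iff:
  "wo_unbounded_in r A X \<longleftrightarrow> (\<forall>b \<in> A. \<exists>c \<in> X \<inter> A. b \<in> underS r c)"
  unfolding wo_unbounded_in_def underS_def by blast

lemma wo_unbounded_in_Field_iff_cofinal:
  "X \<subseteq> Field r \<Longrightarrow> wo_unbounded_in r (Field r) X \<longleftrightarrow> cofinal X r"
  unfolding wo_unbounded_in_def cofinal_def by blast

lemma subset_wo_closure: "X \<subseteq> Field r \<Longrightarrow> X \<subseteq> wo_closure r X"
  unfolding wo_closure_def by blast

lemma wo_closure_subset_Field: "wo_closure r X \<subseteq> Field r"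
  unfolding wo_closure_def by blast

lemma wo_closure_minimal:
  assumes "wo_closed_in r (Field r) C" and "X \<subseteq> C"
  shows "wo_closure r X \<subseteq> C"
  using assms wo_unbounded_in_mono[OF \<open>X \<subseteq> C\<close>]
  unfolding wo_closure_def wo_closed_in_def by blast

lemma wo_club_mem_if_limit_point:
  "wo_club r C \<Longrightarrow> wo_limit r g \<Longrightarrow> wo_unbounded_in r (underS r g) C \<Longrightarrow> g \<in> C"
  unfolding wo_club_def wo_club_in_def wo_closed_in_def wo_limit_def by auto

lemma wo_stationary_mono:
  "wo_stationary r T \<Longrightarrow> T \<subseteq> T' \<Longrightarrow> T' \<subseteq> Field r \<Longrightarrow> wo_stationary r T'"
  unfolding wo_stationary_def by blast

text \<open>Where S d is bounded in d nothing is guessed and any club of d will do.\<close>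

definition club_of_guess :: "'a rel \<Rightarrow> ('a \<Rightarrow> 'a set) \<Rightarrow> 'a \<Rightarrow> 'a set" where
  "club_of_guess r S d =
     (if wo_unbounded_in r (underS r d) (S d) then wo_closure r (S d) \<inter> underS r d
      else underS r d)"

context wo_rel
begin

lemma underS_trans: "x \<in> underS y \<Longrightarrow> y \<in> underS z \<Longrightarrow> x \<in> underS z"
  using TRANS ANTISYM unfolding underS_def trans_def antisym_def by blast

lemma underS_under_trans: "x \<in> underS y \<Longrightarrow> (y, z) \<in> r \<Longrightarrow> x \<in> underS z"
  using TRANS ANTISYM unfolding underS_def trans_def antisym_def by blast

lemma under_underS_trans: "(x, y) \<in> r \<Longrightarrow> y \<in> underS z \<Longrightarrow> x \<in> underS z"
  using TRANS ANTISYM unfolding underS_def trans_def antisym_def by blast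

lemma not_under_imp_underS:
  "x \<in> Field r \<Longrightarrow> y \<in> Field r \<Longrightarrow> (x, y) \<notin> r \<Longrightarrow> y \<in> underS x"
  using TOTALS REFL unfolding underS_def refl_on_def by blast

lemma wo_unbounded_in_underS_wo_closure:
  assumes "wo_unbounded_in r (underS g) (wo_closure r X)"
  shows "wo_unbounded_in r (underS g) X"
  unfolding wo_unbounded_in_underS_iff
proof
  fix b assume "b \<in> underS g"
  with assms obtain c where c: "c \<in> wo_closure r X" "c \<in> underS g" "b \<in> underS c"
    unfolding wo_unbounded_in_underS_iff by blast
  show "\<exists>c \<in> X \<inter> underS g. b \<in> underS c"
  proof (cases "c \<in> X")
    case True
    with c show ?thesis by blast
  next
    case False
    with c have "wo_unbounded_in r (underS c) X"
      unfolding wo_closure_def by blast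
    with c(3) obtain c' where "c' \<in> X" "c' \<in> underS c" "b \<in> underS c'"
      unfolding wo_unbounded_in_underS_iff by blast
    with c(2) show ?thesis using underS_trans by blast
  qed
qed

lemma wo_closed_in_wo_closure: "wo_closed_in r A (wo_closure r X)"
  using wo_unbounded_in_underS_wo_closure
  unfolding wo_closed_in_def wo_closure_def wo_limit_def by blast

lemma wo_closure_Int_underS:
  "wo_closure r X \<inter> underS d = wo_closure r (X \<inter> underS d) \<inter> underS d"
proof -
  have "wo_unbounded_in r (underS g) X \<longleftrightarrow> wo_unbounded_in r (underS g) (X \<inter> underS d)"
    if "g \<in> underS d" for g
    using that underS_trans unfolding wo_unbounded_in_def by blast
  then show ?thesis
    unfolding wo_closure_def by blast
qed

lemma wo_limit_if_unbounded_below: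
  "underS g \<noteq> {} \<Longrightarrow> wo_unbounded_in r (underS g) X \<Longrightarrow> wo_limit r g"
  using underS_empty[of g r] unfolding wo_limit_def wo_unbounded_in_def by blast

lemma wo_unbounded_in_if_interleaved:
  assumes "Y \<subseteq> underS g" and "wo_unbounded_in r (underS g) Y" and "h ` Y \<subseteq> Y"
    and "\<And>x. x \<in> Y \<Longrightarrow> \<exists>c \<in> X. x \<in> underS c \<and> (c, h x) \<in> r"
  shows "wo_unbounded_in r (underS g) X"
  unfolding wo_unbounded_in_underS_iff
proof
  fix a assume "a \<in> underS g"
  with assms(2) obtain x where "x \<in> Y" "a \<in> underS x"
    unfolding wo_unbounded_in_underS_iff by blast
  moreover obtain c where "c \<in> X" "x \<in> underS c" "(c, h x) \<in> r"
    using assms(4) \<open>x \<in> Y\<close> by blast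
  moreover have "h x \<in> underS g"
    using assms(1,3) \<open>x \<in> Y\<close> by blast
  ultimately have "c \<in> X" "c \<in> underS g" "a \<in> underS c"
    using underS_trans under_underS_trans by blast+
  then show "\<exists>c \<in> X \<inter> underS g. a \<in> underS c"
    by blast
qed

lemma wo_unbounded_in_Field_choice:
  assumes "wo_unbounded_in r (Field r) X"
  shows "\<exists>h. \<forall>x \<in> Field r. h x \<in> X \<and> x \<in> underS (h x)"
proof -
  have "\<forall>x \<in> Field r. \<exists>c. c \<in> X \<and> x \<in> underS c"
    using assms unfolding wo_unbounded_in_underS_iff by blast
  then show ?thesis
    by (rule bchoice)
qed

lemma wo_club_in_underS_self:
  "wo_limit r d \<Longrightarrow> wo_club_in r (underS d) (underS d)"
  unfolding wo_club_in_def wo_closed_in_def wo_unbounded_in_def wo_limit_def by blast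

lemma wo_club_in_wo_closure_Int_underS:
  assumes "wo_limit r d" and "X \<subseteq> underS d" and "wo_unbounded_in r (underS d) X"
  shows "wo_club_in r (underS d) (wo_closure r X \<inter> underS d)"
  unfolding wo_club_in_def
proof (intro conjI)
  have "X \<subseteq> wo_closure r X \<inter> underS d"
    using assms(2) subset_wo_closure[of X r] Order_Relation.underS_Field[of r d] by blast
  then show "wo_unbounded_in r (underS d) (wo_closure r X \<inter> underS d)"
    using assms(3) wo_unbounded_in_mono by blast
  show "wo_closed_in r (underS d) (wo_closure r X \<inter> underS d)"
    using wo_closed_in_wo_closure[of "underS d" X] wo_unbounded_in_mono[of _ "wo_closure r X"]
    unfolding wo_closed_in_def by blast
qed simp

lemma wo_club_in_club_of_guess:
  assumes "wo_limit r d" and "S d \<subseteq> underS d"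
  shows "wo_club_in r (underS d) (club_of_guess r S d)"
  using assms wo_club_in_wo_closure_Int_underS wo_club_in_underS_self
  unfolding club_of_guess_def by simp

lemma wo_closure_Int_underS_eq_club_of_guess:
  assumes "wo_unbounded_in r (underS d) X" and "X \<inter> underS d = S d"
  shows "wo_closure r X \<inter> underS d = club_of_guess r S d"
proof -
  have "wo_unbounded_in r (underS d) (S d)"
    using assms wo_unbounded_in_Int_iff by metis
  then show ?thesis
    unfolding club_of_guess_def using wo_closure_Int_underS[of X d] assms(2) by simp
qed

end

locale uncountable_regular_card =
  fixes r :: "'a rel"
  assumes card_order: "Card_order r"
    and regular: "regularCard r"
    and uncountable: "|UNIV :: nat set| <o r"

sublocale uncountable_regular_card \<subseteq> wo_rel
  using card_order by unfold_locales (rule card_order_on_well_order_on)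

lemma uncountable_regular_card_cardSuc:
  assumes "Card_order r" and "\<not> finite (Field r)"
  shows "uncountable_regular_card (cardSuc r)"
proof
  have "|UNIV :: nat set| \<le>o |Field r|"
    using assms(2) infinite_iff_card_of_nat by blast
  also have "|Field r| =o r"
    using card_of_Field_ordIso[OF assms(1)] .
  also have "r <o cardSuc r"
    using cardSuc_greater[OF assms(1)] .
  finally show "|UNIV :: nat set| <o cardSuc r" .
  show "Card_order (cardSuc r)"
    using cardSuc_Card_order[OF assms(1)] .
  show "regularCard (cardSuc r)"
    using infinite_cardSuc_regularCard[OF assms(2,1)] .
qed

context uncountable_regular_card
begin

lemma infinite_Field: "\<not> finite (Field r)"
proof -
  have "|UNIV :: nat set| \<le>o |Field r|"
    using ordLess_imp_ordLeq[OF uncountable] ordIso_symmetric[OF card_of_Field_ordIso[OF card_order]]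
    by (rule ordLeq_ordIso_trans)
  then show ?thesis
    using infinite_iff_card_of_nat by blast
qed

lemma wo_unbounded_in_Field_if_card_of_ordIso:
  assumes "X \<subseteq> Field r" and "|X| =o |Field r|"
  shows "wo_unbounded_in r (Field r) X"
proof (rule ccontr)
  assume "\<not> ?thesis"
  then obtain b where b: "b \<in> Field r" and no_above: "\<And>x. x \<in> X \<Longrightarrow> b \<notin> underS x"
    using assms(1) unfolding wo_unbounded_in_underS_iff by blast
  have "Field r \<noteq> under b"
    using Card_order_infinite_not_under[OF card_order infinite_Field] by blast
  then obtain c where c: "c \<in> Field r" "(c, b) \<notin> r"
    using under_Field[of r b] unfolding under_def by blast
  have "X \<subseteq> underS c"
  proof
    fix x assume "x \<in> X"
    then have "(x, b) \<in> r"
      using no_above b assms(1) REFL not_under_imp_underS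
      unfolding underS_def refl_on_def by blast
    then show "x \<in> underS c"
      using under_underS_trans not_under_imp_underS[OF c(1) b c(2)] by blast
  qed
  then have "|X| <o r"
    using card_of_mono1 card_of_underS[OF card_order c(1)] ordLeq_ordLess_trans by blast
  moreover have "|X| =o r"
    using assms(2) card_of_Field_ordIso[OF card_order] by (rule ordIso_transitive)
  ultimately show False
    using not_ordLess_ordIso by blast
qed

lemma card_of_wo_club:
  assumes "wo_club r C"
  shows "|C| =o |Field r|"
proof -
  have "C \<subseteq> Field r" and "cofinal C r"
    using assms wo_unbounded_in_Field_iff_cofinal
    unfolding wo_club_def wo_club_in_def by auto
  then have "|C| =o r"
    using regular unfolding regularCard_def by blast
  then show ?thesis
    using ordIso_symmetric[OF card_of_Field_ordIso[OF card_order]] by (rule ordIso_transitive)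
qed

lemma limit_above_small_set:
  assumes "K \<subseteq> Field r" and "K \<noteq> {}" and "|K| <o r"
    and no_max: "\<And>k. k \<in> K \<Longrightarrow> \<exists>k' \<in> K. k \<in> underS k'"
  shows "\<exists>g. wo_limit r g \<and> K \<subseteq> underS g \<and> wo_unbounded_in r (underS g) K"
proof -
  have "\<not> cofinal K r"
    using assms(1,3) regular not_ordLess_ordIso unfolding regularCard_def by blast
  then obtain a where a: "a \<in> Field r" and "\<forall>k \<in> K. (a, k) \<notin> r \<or> a = k"
    unfolding cofinal_def by blast
  then have "\<forall>k \<in> K. (k, a) \<in> r"
    using assms(1) REFL not_under_imp_underS unfolding underS_def refl_on_def by blast
  then have "K \<subseteq> underS a"
    using no_max underS_under_trans by blast
  define U where "U = {a \<in> Field r. K \<subseteq> underS a}"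
  have "U \<subseteq> Field r" and "a \<in> U"
    unfolding U_def using a \<open>K \<subseteq> underS a\<close> by auto
  then have "minim U \<in> U" and g_least: "\<And>x. x \<in> U \<Longrightarrow> (minim U, x) \<in> r"
    using minim_in minim_least by blast+
  define g where "g = minim U"
  have "K \<subseteq> underS g"
    using \<open>minim U \<in> U\<close> unfolding g_def U_def by blast
  have unbounded: "wo_unbounded_in r (underS g) K"
    unfolding wo_unbounded_in_underS_iff
  proof
    fix x assume x: "x \<in> underS g"
    have "x \<notin> U"
      using x g_least ANTISYM unfolding g_def underS_def antisym_def by blast
    moreover have "x \<in> Field r"
      using x Order_Relation.underS_Field by fast
    ultimately obtain k where "k \<in> K" "k \<notin> underS x"
      unfolding U_def by blast
    then have "(x, k) \<in> r"
      using assms(1) \<open>x \<in> Field r\<close> REFL not_under_imp_underS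
      unfolding underS_def refl_on_def by blast
    then show "\<exists>k' \<in> K \<inter> underS g. x \<in> underS k'"
      using no_max[OF \<open>k \<in> K\<close>] \<open>K \<subseteq> underS g\<close> under_underS_trans by blast
  qed
  moreover have "wo_limit r g"
    using assms(2) \<open>K \<subseteq> underS g\<close> unbounded wo_limit_if_unbounded_below by blast
  ultimately show ?thesis
    using \<open>K \<subseteq> underS g\<close> by blast
qed

lemma limit_above_orbit:
  assumes "\<And>x. x \<in> Field r \<Longrightarrow> x \<in> underS (h x)" and "b \<in> Field r"
  shows "\<exists>g. wo_limit r g \<and> range (\<lambda>n. (h ^^ n) b) \<subseteq> underS g \<and>
    wo_unbounded_in r (underS g) (range (\<lambda>n. (h ^^ n) b))"
proof (rule limit_above_small_set)
  have "h x \<in> Field r" if "x \<in> Field r" for x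
    using assms(1)[OF that] unfolding underS_def Field_def by blast
  then have "(h ^^ n) b \<in> Field r" for n
    using assms(2) by (induction n) auto
  then show "range (\<lambda>n. (h ^^ n) b) \<subseteq> Field r"
    by blast
  show "|range (\<lambda>n. (h ^^ n) b)| <o r"
    using card_of_image uncountable by (rule ordLeq_ordLess_trans)
  show "\<exists>k' \<in> range (\<lambda>n. (h ^^ n) b). k \<in> underS k'"
    if k: "k \<in> range (\<lambda>n. (h ^^ n) b)" for k
  proof -
    obtain n where "k = (h ^^ n) b"
      using k by blast
    then have "(h ^^ Suc n) b = h k" and "k \<in> underS (h k)"
      using assms \<open>(h ^^ n) b \<in> Field r\<close> by auto
    then show ?thesis
      by (metis rangeI)
  qed
qed simp

lemma limit_above_interleaved:
  assumes "\<And>x. x \<in> Field r \<Longrightarrow> x \<in> underS (h x)" and "b \<in> Field r"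
  shows "\<exists>g. wo_limit r g \<and> b \<in> underS g \<and>
    (\<forall>X. (\<forall>x \<in> Field r. \<exists>c \<in> X. x \<in> underS c \<and> (c, h x) \<in> r) \<longrightarrow>
      wo_unbounded_in r (underS g) X)"
proof -
  define Y where "Y = range (\<lambda>n. (h ^^ n) b)"
  have "\<exists>g. wo_limit r g \<and> Y \<subseteq> underS g \<and> wo_unbounded_in r (underS g) Y"
    unfolding Y_def using assms by (rule limit_above_orbit)
  then obtain g where g: "wo_limit r g" "Y \<subseteq> underS g" "wo_unbounded_in r (underS g) Y"
    by blast
  have "h ` Y \<subseteq> Y"
  proof
    fix y assume "y \<in> h ` Y"
    then obtain n where "y = h ((h ^^ n) b)"
      unfolding Y_def by blast
    then have "y = (h ^^ Suc n) b"
      by simp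
    then show "y \<in> Y"
      unfolding Y_def by (rule range_eqI)
  qed
  have "Y \<subseteq> Field r"
    using g(2) Order_Relation.underS_Field by (rule order_trans)
  have "b \<in> Y"
    unfolding Y_def by (rule range_eqI[of _ _ 0]) simp
  then have "b \<in> underS g"
    using g(2) by blast
  moreover have "wo_unbounded_in r (underS g) X"
    if "\<forall>x \<in> Field r. \<exists>c \<in> X. x \<in> underS c \<and> (c, h x) \<in> r" for X
    using wo_unbounded_in_if_interleaved[OF g(2,3) \<open>h ` Y \<subseteq> Y\<close>] that \<open>Y \<subseteq> Field r\<close>
    by blast
  ultimately show ?thesis
    using g(1) by blast
qed

lemma wo_club_Int:
  assumes C1: "wo_club r C1" and C2: "wo_club r C2"
  shows "wo_club r (C1 \<inter> C2)"
  unfolding wo_club_def wo_club_in_def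
proof (intro conjI)
  show "C1 \<inter> C2 \<subseteq> Field r"
    using C1 unfolding wo_club_def wo_club_in_def by blast
  show "wo_closed_in r (Field r) (C1 \<inter> C2)"
    using C1 C2 wo_unbounded_in_mono[of "C1 \<inter> C2" C1] wo_unbounded_in_mono[of "C1 \<inter> C2" C2]
    unfolding wo_club_def wo_club_in_def wo_closed_in_def by blast
  have C1_unbounded: "wo_unbounded_in r (Field r) C1"
    using C1 unfolding wo_club_def wo_club_in_def by blast
  obtain h1 where h1: "\<And>x. x \<in> Field r \<Longrightarrow> h1 x \<in> C1 \<and> x \<in> underS (h1 x)"
    using wo_unbounded_in_Field_choice[OF C1_unbounded] by blast
  have C2_unbounded: "wo_unbounded_in r (Field r) C2"
    using C2 unfolding wo_club_def wo_club_in_def by blast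
  obtain h2 where h2: "\<And>x. x \<in> Field r \<Longrightarrow> h2 x \<in> C2 \<and> x \<in> underS (h2 x)"
    using wo_unbounded_in_Field_choice[OF C2_unbounded] by blast
  have h1_Field: "h1 x \<in> Field r" if "x \<in> Field r" for x
    using h1[OF that] unfolding underS_def Field_def by blast
  define h where "h = h2 \<circ> h1"
  have h1_h: "h1 x \<in> underS (h x)" if "x \<in> Field r" for x
    using h2[OF h1_Field[OF that]] unfolding h_def by simp
  have x_h: "x \<in> underS (h x)" if "x \<in> Field r" for x
    using h1[OF that] h1_h[OF that] underS_trans by blast
  have interleave_C1: "\<exists>c \<in> C1. x \<in> underS c \<and> (c, h x) \<in> r" if "x \<in> Field r" for x
    using h1[OF that] h1_h[OF that] unfolding underS_def by blast
  have interleave_C2: "\<exists>c \<in> C2. x \<in> underS c \<and> (c, h x) \<in> r" if "x \<in> Field r" for x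
  proof -
    have "h x \<in> C2" "x \<in> underS (h x)"
      using h2 h1_Field x_h that unfolding h_def by auto
    moreover have "(h x, h x) \<in> r"
      using \<open>x \<in> underS (h x)\<close> REFL unfolding underS_def refl_on_def Field_def by blast
    ultimately show ?thesis
      by blast
  qed
  show "wo_unbounded_in r (Field r) (C1 \<inter> C2)"
    unfolding wo_unbounded_in_underS_iff
  proof
    fix b assume "b \<in> Field r"
    then obtain g where g: "wo_limit r g" "b \<in> underS g"
      "wo_unbounded_in r (underS g) C1" "wo_unbounded_in r (underS g) C2"
      using limit_above_interleaved[OF x_h] interleave_C1 interleave_C2 by blast
    then have "g \<in> C1 \<inter> C2"
      using wo_club_mem_if_limit_point[OF C1] wo_club_mem_if_limit_point[OF C2] by blast
    then show "\<exists>c \<in> (C1 \<inter> C2) \<inter> Field r. b \<in> underS c"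
      using g(1,2) unfolding wo_limit_def by blast
  qed
qed

lemma wo_club_limit_points:
  assumes "wo_unbounded_in r (Field r) X"
  shows "wo_club r {g \<in> Field r. wo_limit r g \<and> wo_unbounded_in r (underS g) X}"
    (is "wo_club r ?E")
  unfolding wo_club_def wo_club_in_def
proof (intro conjI)
  show "?E \<subseteq> Field r"
    by blast
  have "?E \<subseteq> wo_closure r X"
    unfolding wo_closure_def by blast
  then show "wo_closed_in r (Field r) ?E"
    using wo_unbounded_in_mono wo_unbounded_in_underS_wo_closure
    unfolding wo_closed_in_def by blast
  obtain h where h: "\<And>x. x \<in> Field r \<Longrightarrow> h x \<in> X \<and> x \<in> underS (h x)"
    using wo_unbounded_in_Field_choice[OF assms] by blast
  have interleave: "\<exists>c \<in> X. x \<in> underS c \<and> (c, h x) \<in> r" if "x \<in> Field r" for x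
    using h[OF that] REFL unfolding underS_def refl_on_def Field_def by blast
  show "wo_unbounded_in r (Field r) ?E"
    unfolding wo_unbounded_in_underS_iff[of r "Field r" ?E]
  proof
    fix b assume "b \<in> Field r"
    then obtain g where "wo_limit r g" "b \<in> underS g" "wo_unbounded_in r (underS g) X"
      using limit_above_interleaved[of h] h interleave by blast
    then show "\<exists>c \<in> ?E \<inter> Field r. b \<in> underS c"
      unfolding wo_limit_def by blast
  qed
qed

lemma wo_stationary_Int_club:
  assumes "wo_stationary r T" and "wo_club r E"
  shows "wo_stationary r (T \<inter> E)"
  unfolding wo_stationary_def
proof (intro conjI allI impI)
  show "T \<inter> E \<subseteq> Field r"
    using assms(1) unfolding wo_stationary_def by blast
  fix C assume "wo_club r C"
  then have "T \<inter> (E \<inter> C) \<noteq> {}"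
    using assms wo_club_Int unfolding wo_stationary_def by blast
  then show "T \<inter> E \<inter> C \<noteq> {}"
    by (simp add: Int_assoc)
qed

lemma wo_club_wo_closure:
  assumes "X \<subseteq> Field r" and "wo_unbounded_in r (Field r) X"
  shows "wo_club r (wo_closure r X)"
  unfolding wo_club_def wo_club_in_def
  using wo_unbounded_in_mono[OF subset_wo_closure[OF assms(1)] assms(2)]
  by (simp add: wo_closure_subset_Field wo_closed_in_wo_closure)

lemma wo_club_in_club_of_guess_if_superclub_seq:
  assumes "superclub_seq r S" and "d \<in> wo_limits r"
  shows "wo_club_in r (underS d) (club_of_guess r S d)"
proof (rule wo_club_in_club_of_guess)
  show "wo_limit r d"
    using assms(2) unfolding wo_limits_def by simp
  then show "S d \<subseteq> underS d"
    using assms(1) unfolding superclub_seq_def wo_limit_def by blast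
qed

lemma superclub_seq_guesses_clubs:
  assumes "superclub_seq r S" and "wo_club r C"
  shows "\<exists>D. D \<subseteq> C \<and> wo_club r D \<and>
    wo_stationary r {d \<in> wo_limits r. D \<inter> underS d = club_of_guess r S d}"
proof -
  have C: "C \<subseteq> Field r" "wo_closed_in r (Field r) C"
    using assms(2) unfolding wo_club_def wo_club_in_def by auto
  obtain B where B: "B \<subseteq> C" "|B| =o |Field r|"
    and guessed: "wo_stationary r {d \<in> Field r. B \<inter> underS d = S d}"
    using assms(1) C(1) card_of_wo_club[OF assms(2)] unfolding superclub_seq_def by blast
  have B_Field: "B \<subseteq> Field r"
    using B(1) C(1) by blast
  have B_unbounded: "wo_unbounded_in r (Field r) B"
    using B_Field B(2) by (rule wo_unbounded_in_Field_if_card_of_ordIso)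
  define D where "D = wo_closure r B"
  define E where "E = {g \<in> Field r. wo_limit r g \<and> wo_unbounded_in r (underS g) B}"
  have "D \<subseteq> C"
    unfolding D_def using C(2) B(1) by (rule wo_closure_minimal)
  moreover have "wo_club r D"
    unfolding D_def using B_Field B_unbounded by (rule wo_club_wo_closure)
  moreover have "wo_stationary r {d \<in> wo_limits r. D \<inter> underS d = club_of_guess r S d}"
  proof (rule wo_stationary_mono)
    show "wo_stationary r ({d \<in> Field r. B \<inter> underS d = S d} \<inter> E)"
      using guessed wo_club_limit_points[OF B_unbounded] unfolding E_def
      by (rule wo_stationary_Int_club)
    show "{d \<in> Field r. B \<inter> underS d = S d} \<inter> E \<subseteq>
        {d \<in> wo_limits r. D \<inter> underS d = club_of_guess r S d}"
    proof
      fix d assume "d \<in> {d \<in> Field r. B \<inter> underS d = S d} \<inter> E"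
      then have "wo_limit r d" "wo_unbounded_in r (underS d) B" "B \<inter> underS d = S d"
        unfolding E_def by auto
      then show "d \<in> {d \<in> wo_limits r. D \<inter> underS d = club_of_guess r S d}"
        using wo_closure_Int_underS_eq_club_of_guess unfolding D_def wo_limits_def by simp
    qed
    show "{d \<in> wo_limits r. D \<inter> underS d = club_of_guess r S d} \<subseteq> Field r"
      unfolding wo_limits_def wo_limit_def by blast
  qed
  ultimately show ?thesis
    by blast
qed

end

theorem lemma2p1:
  fixes r :: "'a rel"
  assumes "Card_order r"
    and "\<not> finite (Field r)"
    and "superclub (cardSuc r)"
  shows "\<exists>B :: 'a set \<Rightarrow> 'a set set.
     (\<forall>d \<in> wo_limits (cardSuc r).
        wo_club_in (cardSuc r) (Order_Relation.underS (cardSuc r) d) (B d)) \<and>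
     (\<forall>C. wo_club (cardSuc r) C \<longrightarrow>
        (\<exists>D. D \<subseteq> C \<and> wo_club (cardSuc r) D \<and>
           wo_stationary (cardSuc r) {d \<in> wo_limits (cardSuc r). D \<inter> Order_Relation.underS (cardSuc r) d = B d}))"
proof -
  interpret uncountable_regular_card "cardSuc r"
    using assms(1,2) by (rule uncountable_regular_card_cardSuc)
  obtain S where S: "superclub_seq (cardSuc r) S"
    using assms(3) unfolding superclub_def by blast
  show ?thesis
  proof (rule exI[of _ "club_of_guess (cardSuc r) S"], intro conjI ballI allI impI)
    fix d assume "d \<in> wo_limits (cardSuc r)"
    with S show "wo_club_in (cardSuc r) (underS d) (club_of_guess (cardSuc r) S d)"
      by (rule wo_club_in_club_of_guess_if_superclub_seq)
  next
    fix C assume "wo_club (cardSuc r) C"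
    with S show "\<exists>D. D \<subseteq> C \<and> wo_club (cardSuc r) D \<and> wo_stationary (cardSuc r)
        {d \<in> wo_limits (cardSuc r). D \<inter> underS d = club_of_guess (cardSuc r) S d}"
      by (rule superclub_seq_guesses_clubs)
  qed
qed

end
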